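(* The sequence $\Delta(\mathbf{t}_{3/2})$ is $3/2$-automatic.
   Context: Base-$3/2$ expansions: $\langle 0\rangle_{3/2}$ is the empty word, and for $n\ge 1$, writing $2n=3m+d$ with integers $m\ge0$, $d\in\{0,1,2\}$, set $\langle n\rangle_{3/2}=\langle m\rangle_{3/2}\,d$ (a word over $\{0,1,2\}$, most significant digit first). The Thue--Morse word in base $3/2$ is $\mathbf{t}_{3/2}=(t_n)_{n\ge0}$ with $t_n$ the digit sum of $\langle n\rangle_{3/2}$ modulo $2$. For a binary sequence $\mathbf{x}=(x_n)$, $\Delta(\mathbf{x})=(x_{n+1}-x_n\bmod 2)_{n\ge0}$. A sequence $(y_n)_{n\ge0}$ is $3/2$-automatic if there is a deterministic finite automaton with output, over the input alphabet $\{0,1,2\}$, such that for every $n\ge0$, $y_n$ is the output of the state reached after reading $\langle n\rangle_{3/2}$ from the initial state. *)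

theory Defs
  imports Main
begin

text \<open>Base-3/2 expansion, most significant digit first; digits are naturals in {0,1,2}.
  For n \<ge> 1, 2n = 3m + d with d = 2n mod 3, m = 2n div 3.\<close>
function base32 :: "nat \<Rightarrow> nat list" where
  "base32 n = (if n = 0 then [] else base32 ((2 * n) div 3) @ [(2 * n) mod 3])"
  by auto
termination
  by (relation "measure id") auto

definition tm32 :: "nat \<Rightarrow> nat" where
  "tm32 n = sum_list (base32 n) mod 2"

definition Delta :: "(nat \<Rightarrow> nat) \<Rightarrow> nat \<Rightarrow> nat" where
  "Delta x n = nat ((int (x (Suc n)) - int (x n)) mod 2)"

definition automatic32 :: "(nat \<Rightarrow> 'b) \<Rightarrow> bool" where
  "automatic32 y \<longleftrightarrow>
     (\<exists>(Q :: nat set) q0 (delta :: nat \<Rightarrow> nat \<Rightarrow> nat) (out :: nat \<Rightarrow> 'b).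
        finite Q \<and> q0 \<in> Q \<and>
        (\<forall>q\<in>Q. \<forall>d\<in>{0,1,2}. delta q d \<in> Q) \<and>
        (\<forall>n. out (foldl delta q0 (base32 n)) = y n))"

end

theory Submission
  imports Defs
begin

text \<open>Adding 1 to n in base 3/2: writing 2n = 3m + d, one has 2(n+1) = 3m + (d+2). If d = 0 the
  last digit simply becomes 2, which changes the digit sum by 2. If d > 0 there is a carry: the
  expansion of n+1 is that of m+1 followed by d-1, so the digit sum changes by one less than it does
  from m to m+1. Hence the parity of the change at n is 0 if the last digit of n is 0 and is the
  complement of the parity of the change at m otherwise, which is a two-state automaton reading
  the expansion of n.\<close>

lemma base32_0 [simp]: "base32 0 = []"
  by (subst base32.simps) simp

lemma base32_pos: "n > 0 \<Longrightarrow> base32 n = base32 (2 * n div 3) @ [2 * n mod 3]"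
  by (subst base32.simps) simp

declare base32.simps [simp del]

lemma base32_Suc_no_carry:
  assumes "2 * n mod 3 = 0"
  shows "base32 (Suc n) = base32 (2 * n div 3) @ [2]"
proof -
  have "2 * Suc n div 3 = 2 * n div 3" "2 * Suc n mod 3 = 2"
    using assms by presburger+
  then show ?thesis
    using base32_pos [of "Suc n"] by simp
qed

lemma base32_Suc_carry:
  assumes "2 * n mod 3 = Suc d"
  shows "base32 (Suc n) = base32 (Suc (2 * n div 3)) @ [d]"
proof -
  have "2 * Suc n div 3 = Suc (2 * n div 3)" "2 * Suc n mod 3 = d"
    using assms by presburger+
  then show ?thesis
    using base32_pos [of "Suc n"] by simp
qed

lemma Delta_mod_2: "Delta (\<lambda>n. f n mod 2) n = (f (Suc n) + f n) mod 2"
  unfolding Delta_def by (cases "even (f n)"; cases "even (f (Suc n))") (auto simp: mod2_eq_if)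

lemma Delta_tm32: "Delta tm32 n = (sum_list (base32 (Suc n)) + sum_list (base32 n)) mod 2"
  using Delta_mod_2 [of "\<lambda>n. sum_list (base32 n)"] by (simp add: tm32_def [abs_def])

text \<open>The state reached on a word is the parity of the length of its final run of nonzero digits.\<close>
definition tm32_carry_step :: "nat \<Rightarrow> nat \<Rightarrow> nat" where
  "tm32_carry_step q d = (if d = 0 then 0 else 1 - q)"

lemma Delta_tm32_rec: "Delta tm32 n = tm32_carry_step (Delta tm32 (2 * n div 3)) (2 * n mod 3)"
proof (cases "2 * n mod 3")
  case 0
  with base32_Suc_no_carry [of n] base32_pos [of n] show ?thesis
    by (cases "n = 0") (simp_all add: Delta_tm32 tm32_carry_step_def)
next
  case (Suc d)
  then have "n > 0" by (cases n) simp_all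
  let ?m = "2 * n div 3"
  have "sum_list (base32 (Suc n)) + sum_list (base32 n)
      = sum_list (base32 (Suc ?m)) + sum_list (base32 ?m) + (2 * d + 1)"
    using base32_Suc_carry [OF Suc] base32_pos [OF \<open>n > 0\<close>] Suc by simp
  then have "Delta tm32 n = (sum_list (base32 (Suc ?m)) + sum_list (base32 ?m) + (2 * d + 1)) mod 2"
    by (simp add: Delta_tm32)
  also have "\<dots> = 1 - Delta tm32 ?m"
    unfolding Delta_tm32 by presburger
  finally show ?thesis
    using Suc by (simp add: tm32_carry_step_def)
qed

lemma Delta_tm32_foldl: "Delta tm32 n = foldl tm32_carry_step 0 (base32 n)"
proof (induction n rule: less_induct)
  case (less n)
  show ?case
  proof (cases "n = 0")
    case True
    then show ?thesis by (simp add: Delta_tm32 base32_Suc_no_carry)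
  next
    case False
    then have "2 * n div 3 < n" by simp
    with False less show ?thesis
      by (simp add: base32_pos Delta_tm32_rec [of n])
  qed
qed

theorem lemma9:
  shows "automatic32 (Delta tm32)"
  unfolding automatic32_def
proof (intro exI conjI)
  show "finite {0, 1 :: nat}" "(0 :: nat) \<in> {0, 1}" by simp_all
  show "\<forall>q\<in>{0, 1}. \<forall>d\<in>{0, 1, 2}. tm32_carry_step q d \<in> {0, 1}"
    by (simp add: tm32_carry_step_def)
  show "\<forall>n. id (foldl tm32_carry_step 0 (base32 n)) = Delta tm32 n"
    by (simp add: Delta_tm32_foldl)
qed

end
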